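(* Let $N$ be a positive integer, $\alpha>1$, and suppose $(L_1,\ldots,L_K)\in\mathrm{TFF}(\alpha,N)$. Let $\tilde N=\sum_{i=1}^K L_i-N$ and $\tilde\alpha=\alpha/(\alpha-1)=\alpha N/\tilde N$. Then $(L_1,\ldots,L_K)\in\mathrm{TFF}(\tilde\alpha,\tilde N)$.
   Context: For a positive integer $N$, $\mathrm{TFF}(\alpha,N)$ is the set of weakly decreasing sequences of positive integers $(L_1,\ldots,L_K)$ such that there exist orthogonal projections $P_1,\ldots,P_K$ on $\mathbb{R}^N$ with $\operatorname{rank}P_i=L_i$ and $\sum_{i=1}^K P_i=\alpha\mathbf I$ (necessarily $\alpha=\sum_i L_i/N$). *)

theory Defs
  imports "Jordan_Normal_Form.DL_Rank"
begin

definition mat_sum :: "nat \<Rightarrow> (nat \<Rightarrow> real mat) \<Rightarrow> nat \<Rightarrow> real mat" where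
  "mat_sum n P K = foldr (+) (map P [0..<K]) (0\<^sub>m n n)"

definition orth_proj :: "nat \<Rightarrow> real mat \<Rightarrow> bool" where
  "orth_proj n P \<longleftrightarrow> P \<in> carrier_mat n n \<and> P * P = P \<and> transpose_mat P = P"

definition TFF :: "real \<Rightarrow> nat \<Rightarrow> nat list set" where
  "TFF \<alpha> N = {Ls. sorted_wrt (\<ge>) Ls \<and> (\<forall>L\<in>set Ls. 0 < L) \<and>
     (\<exists>P. (\<forall>i<length Ls. orth_proj N (P i) \<and> vec_space.rank N (P i) = Ls ! i) \<and>
          mat_sum N P (length Ls) = \<alpha> \<cdot>\<^sub>m 1\<^sub>m N)}"

end

theory Submission
  imports Defs "Jordan_Normal_Form.Gram_Schmidt"
begin

text \<open>Naimark complement. Factor each projection as \<open>P\<^sub>i = U\<^sub>i U\<^sub>i\<^sup>T\<close> with an isometry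
  \<open>U\<^sub>i : \<real>\<^bsup>L\<^sub>i\<^esup> \<rightarrow> \<real>\<^sup>N\<close> and place the \<open>U\<^sub>i\<close> side by side: the resulting \<open>N \<times> M\<close> matrix \<open>V\<close>,
  \<open>M = \<Sum> L\<^sub>i\<close>, satisfies \<open>V V\<^sup>T = \<alpha> I\<close>. Hence \<open>Q = I - V\<^sup>T V / \<alpha>\<close> is an orthogonal projection
  on \<open>\<real>\<^sup>M\<close> of trace, i.e. rank, \<open>M - N\<close>; write \<open>Q = W W\<^sup>T\<close> with \<open>W\<^sup>T W = I\<close>. The row blocks
  \<open>X\<^sub>i\<close> of \<open>W\<close> satisfy \<open>X\<^sub>i X\<^sub>i\<^sup>T = (1 - 1/\<alpha>) I\<close> because \<open>U\<^sub>i\<close> is an isometry, so the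
  \<open>R\<^sub>i = X\<^sub>i\<^sup>T X\<^sub>i / (1 - 1/\<alpha>)\<close> are orthogonal projections of rank \<open>L\<^sub>i\<close> on \<open>\<real>\<^bsup>M-N\<^esup>\<close>
  summing to \<open>W\<^sup>T W / (1 - 1/\<alpha>) = \<alpha>/(\<alpha> - 1) I\<close>.\<close>

section \<open>Orthonormal bases of column spaces\<close>

context vec_space
begin

lemma col_space_basis_exists:
  assumes A: "A \<in> carrier_mat n nc"
  obtains S where "S \<subseteq> carrier_vec n" "finite S" "lin_indpt S" "card S = rank A"
    "span S = col_space A"
proof -
  have cols: "set (cols A) \<subseteq> carrier_vec n" using A cols_dim by blast
  obtain S where S: "maximal S (\<lambda>T. T \<subseteq> set (cols A) \<and> lin_indpt T)"
    using maximal_exists[of "\<lambda>T. T \<subseteq> set (cols A) \<and> lin_indpt T" "card (set (cols A))" "{}"]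
    by (meson List.finite_set card_mono empty_iff empty_subsetI finite_lin_indpt2 rev_finite_subset)
  have sub: "S \<subseteq> set (cols A)" and indpt: "lin_indpt S" using S unfolding maximal_def by auto
  have carr: "S \<subseteq> carrier_vec n" using sub cols by blast
  have "set (cols A) \<subseteq> span S"
  proof
    fix v assume v: "v \<in> set (cols A)"
    show "v \<in> span S"
    proof (rule ccontr)
      assume out: "v \<notin> span S"
      then have "v \<notin> S" using in_own_span[OF carr] by blast
      then have "lin_indpt (S \<union> {v})"
        using lin_dep_iff_in_span[OF carr indpt _ \<open>v \<notin> S\<close>] v cols out by auto
      then have "S \<union> {v} = S" using S v sub unfolding maximal_def by blast
      then show False using \<open>v \<notin> S\<close> by blast
    qed
  qed
  then have "span S = col_space A"
    unfolding col_space_def using span_subsetI[OF carr] span_is_monotone[OF sub] by blast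
  moreover have "finite S" using sub finite_subset by blast
  ultimately show ?thesis using that carr indpt rank_card_indpt[OF A S] by simp
qed

lemma span_map_smult:
  assumes us: "set us \<subseteq> carrier_vec n" and c: "\<And>u. u \<in> set us \<Longrightarrow> c u \<noteq> 0"
  shows "span (set (map (\<lambda>u. c u \<cdot>\<^sub>v u) us)) = span (set us)"
proof
  have vs: "set (map (\<lambda>u. c u \<cdot>\<^sub>v u) us) \<subseteq> carrier_vec n" using us by auto
  show "span (set (map (\<lambda>u. c u \<cdot>\<^sub>v u) us)) \<subseteq> span (set us)"
    using us in_own_span[OF us] smult_in_span[OF us] by (intro span_subsetI) auto
  have "u \<in> span (set (map (\<lambda>u. c u \<cdot>\<^sub>v u) us))" if u: "u \<in> set us" for u
  proof -
    have "c u \<cdot>\<^sub>v u \<in> set (map (\<lambda>u. c u \<cdot>\<^sub>v u) us)" using u by simp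
    then have "c u \<cdot>\<^sub>v u \<in> span (set (map (\<lambda>u. c u \<cdot>\<^sub>v u) us))"
      by (rule span_mem[OF vs])
    then have "inverse (c u) \<cdot>\<^sub>v (c u \<cdot>\<^sub>v u) \<in> span (set (map (\<lambda>u. c u \<cdot>\<^sub>v u) us))"
      by (rule smult_in_span[OF vs])
    moreover have "inverse (c u) \<cdot>\<^sub>v (c u \<cdot>\<^sub>v u) = u"
      using c[OF u] by (simp add: smult_smult_assoc)
    ultimately show ?thesis by simp
  qed
  then show "span (set us) \<subseteq> span (set (map (\<lambda>u. c u \<cdot>\<^sub>v u) us))"
    using span_subsetI[OF vs] by blast
qed

lemma mult_eq_right_if_col_space_fixed:
  assumes A: "A \<in> carrier_mat n m" and B: "B \<in> carrier_mat n n" and C: "C \<in> carrier_mat n k"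
    and BA: "B * A = A" and sub: "col_space C \<subseteq> col_space A"
  shows "B * C = C"
proof (rule mat_col_eqI)
  fix j assume j: "j < dim_col C"
  have "col C j \<in> set (cols C)" using j by (metis cols_length cols_nth nth_mem)
  then have "col C j \<in> col_space C"
    unfolding col_space_def using C in_own_span[of "set (cols C)"] cols_dim[of C] by auto
  then obtain x where x: "x \<in> carrier_vec m" "col C j = A *\<^sub>v x"
    using sub col_space_eq[OF A] A by auto
  have "col (B * C) j = B *\<^sub>v col C j" using col_mult2[OF B C] j C by simp
  also have "\<dots> = B *\<^sub>v (A *\<^sub>v x)" using x(2) by simp
  also have "\<dots> = (B * A) *\<^sub>v x" using A B x(1) by simp
  finally show "col (B * C) j = col C j" using BA x(2) by simp
qed (use B C in auto)

end

lemma corthogonal_scalar_prod_self_pos: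
  fixes us :: "real vec list"
  assumes "corthogonal us" "i < length us"
  shows "us ! i \<bullet> us ! i > 0"
proof -
  have "us ! i \<bullet> us ! i \<noteq> 0"
    using corthogonalD[OF assms assms(2)] by (simp add: conjugate_vec_def scalar_prod_def)
  moreover have "us ! i \<bullet> us ! i \<ge> 0" unfolding scalar_prod_def by (intro sum_nonneg) auto
  ultimately show ?thesis by simp
qed

lemma corthogonal_normalize_orthonormal:
  fixes us :: "real vec list"
  assumes orth: "corthogonal us" and us: "set us \<subseteq> carrier_vec n"
    and i: "i < length us" and j: "j < length us"
  defines "vs \<equiv> map (\<lambda>u. (1 / sqrt (u \<bullet> u)) \<cdot>\<^sub>v u) us"
  shows "vs ! i \<bullet> vs ! j = (if i = j then 1 else 0)"
proof -
  have carr: "us ! i \<in> carrier_vec n" "us ! j \<in> carrier_vec n" using us i j by auto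
  have "vs ! i \<bullet> vs ! j
      = (1 / sqrt (us ! i \<bullet> us ! i)) * (1 / sqrt (us ! j \<bullet> us ! j)) * (us ! i \<bullet> us ! j)"
    unfolding vs_def using i j carr by simp
  moreover have "us ! i \<bullet> us ! j = 0 \<longleftrightarrow> i \<noteq> j"
    using corthogonalD[OF orth i j] by (simp add: conjugate_vec_def scalar_prod_def)
  moreover have "us ! i \<bullet> us ! i > 0" by (rule corthogonal_scalar_prod_self_pos[OF orth i])
  ultimately show ?thesis by (auto simp: field_simps)
qed

lemma isometry_onto_col_space_exists:
  fixes A :: "real mat"
  assumes A: "A \<in> carrier_mat n nc"
  obtains U where "U \<in> carrier_mat n (vec_space.rank n A)"
    "U\<^sup>T * U = 1\<^sub>m (vec_space.rank n A)" "vec_space.col_space n U = vec_space.col_space n A"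
proof -
  interpret vec_space "TYPE(real)" n .
  obtain S where S: "S \<subseteq> carrier_vec n" "finite S" "lin_indpt S" "card S = rank A"
    "span S = col_space A"
    using col_space_basis_exists[OF A] .
  obtain ws where ws: "distinct ws" "set ws = S" using finite_distinct_list[OF S(2)] by blast
  define us where "us = gram_schmidt n ws"
  have gs: "span (set ws) = span (set us)" "corthogonal us" "set us \<subseteq> carrier_vec n"
    "length us = length ws"
    using cof_vec_space.gram_schmidt_result[OF _ ws(1) _ us_def] S(1,3) ws(2) by auto
  define vs where "vs = map (\<lambda>u. (1 / sqrt (u \<bullet> u)) \<cdot>\<^sub>v u) us"
  have vs: "set vs \<subseteq> carrier_vec n" "length vs = rank A"
    using gs(3,4) S(4) ws distinct_card unfolding vs_def by fastforce+
  have "u \<bullet> u > 0" if "u \<in> set us" for u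
    using corthogonal_scalar_prod_self_pos[OF gs(2)] that by (metis in_set_conv_nth)
  then have "span (set vs) = span (set us)"
    unfolding vs_def by (intro span_map_smult[OF gs(3)]) force
  then have span: "span (set vs) = col_space A" using gs(1) ws(2) S(5) by simp
  define U where "U = mat_of_cols n vs"
  have U: "U \<in> carrier_mat n (rank A)" unfolding U_def vs(2)[symmetric] by simp
  have "U\<^sup>T * U = 1\<^sub>m (rank A)"
  proof (rule eq_matI)
    fix i j assume "i < dim_row (1\<^sub>m (rank A))" "j < dim_col (1\<^sub>m (rank A))"
    then have ij: "i < length vs" "j < length vs" using vs(2) by auto
    then have "col U i = vs ! i" "col U j = vs ! j"
      unfolding U_def using vs(1) by (metis col_mat_of_cols nth_mem subsetD)+
    then show "(U\<^sup>T * U) $$ (i, j) = 1\<^sub>m (rank A) $$ (i, j)"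
      using corthogonal_normalize_orthonormal[OF gs(2,3)] ij vs(2) gs(4) U
      unfolding vs_def by simp
  qed (use U in auto)
  moreover have "col_space U = col_space A"
    using span unfolding col_space_def U_def cols_mat_of_cols[OF vs(1)] .
  ultimately show ?thesis using that U by blast
qed

section \<open>Orthogonal projections\<close>

lemma isometry_mult_transpose_eq_orth_proj:
  fixes P U :: "real mat"
  assumes P: "orth_proj n P" and U: "U \<in> carrier_mat n r" "U\<^sup>T * U = 1\<^sub>m r"
    and col: "vec_space.col_space n U = vec_space.col_space n P"
  shows "U * U\<^sup>T = P"
proof -
  interpret vec_space "TYPE(real)" n .
  have PC: "P \<in> carrier_mat n n" and PP: "P * P = P" and Pt: "P\<^sup>T = P"
    using P unfolding orth_proj_def by auto
  have UUt: "U * U\<^sup>T \<in> carrier_mat n n" using U by simp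
  have "U * U\<^sup>T * U = U" using U by (simp add: assoc_mult_mat[of U n r "U\<^sup>T" n U r])
  then have "U * U\<^sup>T * P = P"
    using mult_eq_right_if_col_space_fixed[OF U(1) UUt PC] col by simp
  then have "P * (U * U\<^sup>T) = P"
    using transpose_mult[OF UUt PC] transpose_mult[OF U(1), of "U\<^sup>T"] U Pt by auto
  moreover have "P * U = U" using mult_eq_right_if_col_space_fixed[OF PC PC U(1) PP] col by simp
  then have "P * (U * U\<^sup>T) = U * U\<^sup>T" using assoc_mult_mat[OF PC U(1), of "U\<^sup>T" n] U by simp
  ultimately show ?thesis by simp
qed

lemma orth_proj_isometry_factor:
  fixes P :: "real mat"
  assumes "orth_proj n P"
  obtains U where "U \<in> carrier_mat n (vec_space.rank n P)"
    "U\<^sup>T * U = 1\<^sub>m (vec_space.rank n P)" "U * U\<^sup>T = P"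
proof -
  have "P \<in> carrier_mat n n" using assms unfolding orth_proj_def by simp
  from isometry_onto_col_space_exists[OF this] obtain U
    where "U \<in> carrier_mat n (vec_space.rank n P)" "U\<^sup>T * U = 1\<^sub>m (vec_space.rank n P)"
      "vec_space.col_space n U = vec_space.col_space n P" .
  with isometry_mult_transpose_eq_orth_proj[OF assms] that show ?thesis by blast
qed

definition trace :: "'a :: comm_monoid_add mat \<Rightarrow> 'a" where
  "trace A = (\<Sum>i<dim_row A. A $$ (i, i))"

lemma trace_mult_comm:
  fixes A B :: "'a :: comm_semiring_0 mat"
  assumes "A \<in> carrier_mat n m" "B \<in> carrier_mat m n"
  shows "trace (A * B) = trace (B * A)"
proof -
  have "trace (A * B) = (\<Sum>i<n. \<Sum>k<m. A $$ (i, k) * B $$ (k, i))"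
    using assms unfolding trace_def by (simp add: scalar_prod_def lessThan_atLeast0)
  also have "\<dots> = (\<Sum>k<m. \<Sum>i<n. B $$ (k, i) * A $$ (i, k))"
    by (subst sum.swap) (simp add: mult.commute)
  also have "\<dots> = trace (B * A)"
    using assms unfolding trace_def by (simp add: scalar_prod_def lessThan_atLeast0)
  finally show ?thesis .
qed

lemma trace_one [simp]: "trace (1\<^sub>m n :: 'a :: semiring_1 mat) = of_nat n"
  unfolding trace_def by simp

lemma trace_smult:
  fixes A :: "'a :: semiring_0 mat"
  assumes "A \<in> carrier_mat n n"
  shows "trace (c \<cdot>\<^sub>m A) = c * trace A"
  using assms unfolding trace_def by (simp add: sum_distrib_left)

lemma trace_minus:
  fixes A B :: "'a :: ab_group_add mat"
  assumes "A \<in> carrier_mat n n" "B \<in> carrier_mat n n"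
  shows "trace (A - B) = trace A - trace B"
  using assms unfolding trace_def by (simp add: sum_subtractf)

lemma orth_proj_rank_eq_trace:
  fixes P :: "real mat"
  assumes "orth_proj n P"
  shows "real (vec_space.rank n P) = trace P"
proof -
  obtain U where U: "U \<in> carrier_mat n (vec_space.rank n P)"
    "U\<^sup>T * U = 1\<^sub>m (vec_space.rank n P)" "U * U\<^sup>T = P"
    using orth_proj_isometry_factor[OF assms] .
  have "trace P = trace (U\<^sup>T * U)" using trace_mult_comm[OF U(1), of "U\<^sup>T"] U(1,3) by simp
  then show ?thesis using U(2) by simp
qed

lemma transpose_smult_mat: "(c \<cdot>\<^sub>m A)\<^sup>T = c \<cdot>\<^sub>m A\<^sup>T"
  by (rule eq_matI) auto

lemma smult_smult_mat: "a \<cdot>\<^sub>m (b \<cdot>\<^sub>m A) = (a * b :: 'a :: semigroup_mult) \<cdot>\<^sub>m A"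
  by (rule eq_matI) (auto simp: mult.assoc)

lemma smult_mult_smult_mat:
  fixes A B :: "'a :: comm_semiring_0 mat"
  assumes A: "A \<in> carrier_mat nr n" and B: "B \<in> carrier_mat n nc"
  shows "(a \<cdot>\<^sub>m A) * (b \<cdot>\<^sub>m B) = (a * b) \<cdot>\<^sub>m (A * B)"
proof -
  have "(a \<cdot>\<^sub>m A) * (b \<cdot>\<^sub>m B) = a \<cdot>\<^sub>m (A * (b \<cdot>\<^sub>m B))"
    using mult_smult_assoc_mat[OF A smult_carrier_mat[OF B]] .
  also have "\<dots> = (a * b) \<cdot>\<^sub>m (A * B)" by (simp add: mult_smult_distrib[OF A B] smult_smult_mat)
  finally show ?thesis .
qed

lemma orth_proj_complement:
  fixes P :: "real mat"
  assumes "orth_proj n P"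
  shows "orth_proj n (1\<^sub>m n - P)" and "trace (1\<^sub>m n - P) = real n - trace P"
proof -
  have P: "P \<in> carrier_mat n n" "P * P = P" "P\<^sup>T = P" using assms unfolding orth_proj_def by auto
  have C: "1\<^sub>m n - P \<in> carrier_mat n n" using minus_carrier_mat[OF P(1)] .
  have "P * (1\<^sub>m n - P) = 0\<^sub>m n n"
    using P mult_minus_distrib_mat[OF P(1) one_carrier_mat P(1)] by simp
  then have "(1\<^sub>m n - P) * (1\<^sub>m n - P) = (1\<^sub>m n - P) - 0\<^sub>m n n"
    using minus_mult_distrib_mat[OF one_carrier_mat P(1) C] left_mult_one_mat[OF C] by simp
  also have "\<dots> = 1\<^sub>m n - P" using P(1) by (intro eq_matI) auto
  finally show "orth_proj n (1\<^sub>m n - P)"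
    unfolding orth_proj_def using C P transpose_minus[OF one_carrier_mat P(1)] by simp
  show "trace (1\<^sub>m n - P) = real n - trace P" using trace_minus[OF one_carrier_mat P(1)] by simp
qed

lemma orth_proj_scaled_gram:
  fixes X :: "real mat"
  assumes X: "X \<in> carrier_mat l r" and XXt: "X * X\<^sup>T = s \<cdot>\<^sub>m 1\<^sub>m l" and s: "s \<noteq> 0"
  shows "orth_proj r ((1 / s) \<cdot>\<^sub>m (X\<^sup>T * X))" and "trace ((1 / s) \<cdot>\<^sub>m (X\<^sup>T * X)) = real l"
proof -
  have Xt: "X\<^sup>T \<in> carrier_mat r l" using X by simp
  have G: "X\<^sup>T * X \<in> carrier_mat r r" using X by simp
  have "(X\<^sup>T * X) * (X\<^sup>T * X) = X\<^sup>T * (X * X\<^sup>T) * X"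
    using assoc_mult_mat[OF Xt X Xt] assoc_mult_mat[OF G Xt X] assoc_mult_mat[OF Xt X G] by simp
  also have "\<dots> = s \<cdot>\<^sub>m (X\<^sup>T * X)"
    unfolding XXt mult_smult_distrib[OF Xt one_carrier_mat] right_mult_one_mat[OF Xt]
    using mult_smult_assoc_mat[OF Xt X] .
  finally have "((1 / s) \<cdot>\<^sub>m (X\<^sup>T * X)) * ((1 / s) \<cdot>\<^sub>m (X\<^sup>T * X)) = (1 / s) \<cdot>\<^sub>m (X\<^sup>T * X)"
    using G s by (simp add: smult_mult_smult_mat smult_smult_mat)
  moreover have "(X\<^sup>T * X)\<^sup>T = X\<^sup>T * X" using transpose_mult[OF Xt X] by simp
  ultimately show "orth_proj r ((1 / s) \<cdot>\<^sub>m (X\<^sup>T * X))"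
    unfolding orth_proj_def using G by (simp add: transpose_smult_mat)
  have "trace (X\<^sup>T * X) = s * real l"
    using trace_mult_comm[OF Xt X] XXt by (simp add: trace_smult[OF one_carrier_mat])
  then show "trace ((1 / s) \<cdot>\<^sub>m (X\<^sup>T * X)) = real l" using G s by (simp add: trace_smult)
qed

section \<open>Families of matrices and coordinate blocks\<close>

definition mat_sum_rect :: "nat \<Rightarrow> nat \<Rightarrow> (nat \<Rightarrow> 'a :: comm_monoid_add mat) \<Rightarrow> nat \<Rightarrow> 'a mat" where
  "mat_sum_rect nr nc F K = mat nr nc (\<lambda>(a, b). \<Sum>i<K. F i $$ (a, b))"

lemma mat_sum_rect_carrier [simp]: "mat_sum_rect nr nc F K \<in> carrier_mat nr nc"
  and dim_row_mat_sum_rect [simp]: "dim_row (mat_sum_rect nr nc F K) = nr"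
  and dim_col_mat_sum_rect [simp]: "dim_col (mat_sum_rect nr nc F K) = nc"
  unfolding mat_sum_rect_def by simp_all

lemma index_mat_sum_rect [simp]:
  "a < nr \<Longrightarrow> b < nc \<Longrightarrow> mat_sum_rect nr nc F K $$ (a, b) = (\<Sum>i<K. F i $$ (a, b))"
  unfolding mat_sum_rect_def by simp

lemma mat_sum_rect_cong:
  "(\<And>i. i < K \<Longrightarrow> F i = G i) \<Longrightarrow> mat_sum_rect nr nc F K = mat_sum_rect nr nc G K"
  unfolding mat_sum_rect_def by (auto intro!: cong_mat sum.cong)

lemma mat_sum_eq_mat_sum_rect:
  fixes F :: "nat \<Rightarrow> real mat"
  assumes "\<And>i. i < K \<Longrightarrow> F i \<in> carrier_mat n n"
  shows "mat_sum n F K = mat_sum_rect n n F K"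
proof -
  have "foldr (+) (map F xs) (0\<^sub>m n n) \<in> carrier_mat n n \<and>
      (\<forall>a<n. \<forall>b<n. foldr (+) (map F xs) (0\<^sub>m n n) $$ (a, b) = (\<Sum>x\<leftarrow>xs. F x $$ (a, b)))"
    if "set xs \<subseteq> {..<K}" for xs
    using that assms by (induction xs) auto
  from this[of "[0..<K]"] show ?thesis unfolding mat_sum_def
    by (intro eq_matI) (auto simp: sum_list_distinct_conv_sum_set atLeast0LessThan)
qed

lemma mult_mat_sum_rect:
  fixes A :: "'a :: comm_semiring_0 mat"
  assumes "A \<in> carrier_mat m nr" "\<And>i. i < K \<Longrightarrow> F i \<in> carrier_mat nr nc"
  shows "A * mat_sum_rect nr nc F K = mat_sum_rect m nc (\<lambda>i. A * F i) K"
proof (rule eq_matI)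
  fix a b assume "a < dim_row (mat_sum_rect m nc (\<lambda>i. A * F i) K)"
    "b < dim_col (mat_sum_rect m nc (\<lambda>i. A * F i) K)"
  then have a: "a < m" and b: "b < nc" by auto
  have F: "dim_row (F i) = nr" "dim_col (F i) = nc" if "i < K" for i using assms(2)[OF that] by auto
  have "(A * mat_sum_rect nr nc F K) $$ (a, b) = (\<Sum>k<nr. A $$ (a, k) * (\<Sum>i<K. F i $$ (k, b)))"
    using assms a b by (simp add: scalar_prod_def lessThan_atLeast0)
  also have "\<dots> = (\<Sum>i<K. \<Sum>k<nr. A $$ (a, k) * F i $$ (k, b))"
    by (simp add: sum_distrib_left) (rule sum.swap)
  also have "\<dots> = mat_sum_rect m nc (\<lambda>i. A * F i) K $$ (a, b)"
    using assms(1) a b F by (auto simp: scalar_prod_def lessThan_atLeast0 intro!: sum.cong)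
  finally show "(A * mat_sum_rect nr nc F K) $$ (a, b) = mat_sum_rect m nc (\<lambda>i. A * F i) K $$ (a, b)" .
qed (use assms in auto)

lemma mat_sum_rect_mult:
  fixes B :: "'a :: comm_semiring_0 mat"
  assumes "B \<in> carrier_mat nc m" "\<And>i. i < K \<Longrightarrow> F i \<in> carrier_mat nr nc"
  shows "mat_sum_rect nr nc F K * B = mat_sum_rect nr m (\<lambda>i. F i * B) K"
proof (rule eq_matI)
  fix a b assume "a < dim_row (mat_sum_rect nr m (\<lambda>i. F i * B) K)"
    "b < dim_col (mat_sum_rect nr m (\<lambda>i. F i * B) K)"
  then have a: "a < nr" and b: "b < m" by auto
  have F: "dim_row (F i) = nr" "dim_col (F i) = nc" if "i < K" for i using assms(2)[OF that] by auto
  have "(mat_sum_rect nr nc F K * B) $$ (a, b) = (\<Sum>k<nc. (\<Sum>i<K. F i $$ (a, k)) * B $$ (k, b))"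
    using assms a b by (simp add: scalar_prod_def lessThan_atLeast0)
  also have "\<dots> = (\<Sum>i<K. \<Sum>k<nc. F i $$ (a, k) * B $$ (k, b))"
    by (simp add: sum_distrib_right) (rule sum.swap)
  also have "\<dots> = mat_sum_rect nr m (\<lambda>i. F i * B) K $$ (a, b)"
    using assms(1) a b F by (auto simp: scalar_prod_def lessThan_atLeast0 intro!: sum.cong)
  finally show "(mat_sum_rect nr nc F K * B) $$ (a, b) = mat_sum_rect nr m (\<lambda>i. F i * B) K $$ (a, b)" .
qed (use assms in auto)

lemma smult_mat_sum_rect:
  fixes c :: "'a :: semiring_0"
  assumes "\<And>i. i < K \<Longrightarrow> F i \<in> carrier_mat nr nc"
  shows "c \<cdot>\<^sub>m mat_sum_rect nr nc F K = mat_sum_rect nr nc (\<lambda>i. c \<cdot>\<^sub>m F i) K"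
proof -
  have "(c \<cdot>\<^sub>m F i) $$ (a, b) = c * F i $$ (a, b)" if "i < K" "a < nr" "b < nc" for i a b
    using assms[OF that(1)] that(2,3) by simp
  then show ?thesis by (intro eq_matI) (auto simp: sum_distrib_left)
qed

lemma mat_sum_rect_single:
  assumes "j < K" "A \<in> carrier_mat nr nc"
  shows "mat_sum_rect nr nc (\<lambda>i. if i = j then A else 0\<^sub>m nr nc) K = A"
proof (rule eq_matI)
  fix a b assume "a < dim_row A" "b < dim_col A"
  then have "a < nr" "b < nc" using assms(2) by auto
  moreover have "(\<Sum>i<K. (if i = j then A else 0\<^sub>m nr nc) $$ (a, b)) = A $$ (a, b)"
    using assms(1) calculation by (simp add: if_distrib[of "\<lambda>B. B $$ (a, b)"] cong: if_cong)
  ultimately show "mat_sum_rect nr nc (\<lambda>i. if i = j then A else 0\<^sub>m nr nc) K $$ (a, b) = A $$ (a, b)"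
    by simp
qed (use assms in auto)

definition block_offset :: "nat list \<Rightarrow> nat \<Rightarrow> nat" where
  "block_offset Ls i = sum_list (take i Ls)"

definition block_embedding :: "nat list \<Rightarrow> nat \<Rightarrow> real mat" where
  "block_embedding Ls i =
     mat (sum_list Ls) (Ls ! i) (\<lambda>(a, b). if a = block_offset Ls i + b then 1 else 0)"

lemma block_offset_Suc: "i < length Ls \<Longrightarrow> block_offset Ls (Suc i) = block_offset Ls i + Ls ! i"
  unfolding block_offset_def by (simp add: take_Suc_conv_app_nth)

lemma block_offset_mono: "i \<le> j \<Longrightarrow> block_offset Ls i \<le> block_offset Ls j"
  unfolding block_offset_def by (metis le_add_diff_inverse le_add1 sum_list_append take_add)

lemma block_offset_length [simp]: "block_offset Ls (length Ls) = sum_list Ls"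
  unfolding block_offset_def by simp

lemma block_end_le_sum_list: "i < length Ls \<Longrightarrow> block_offset Ls i + Ls ! i \<le> sum_list Ls"
  using block_offset_Suc[of i Ls] block_offset_mono[of "Suc i" "length Ls" Ls] by simp

lemma block_embedding_carrier [simp]: "block_embedding Ls i \<in> carrier_mat (sum_list Ls) (Ls ! i)"
  and dim_row_block_embedding [simp]: "dim_row (block_embedding Ls i) = sum_list Ls"
  and dim_col_block_embedding [simp]: "dim_col (block_embedding Ls i) = Ls ! i"
  unfolding block_embedding_def by simp_all

lemma index_block_embedding:
  "a < sum_list Ls \<Longrightarrow> b < Ls ! i \<Longrightarrow>
     block_embedding Ls i $$ (a, b) = (if a = block_offset Ls i + b then 1 else 0)"
  unfolding block_embedding_def by simp

lemma blocks_disjoint: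
  assumes "i < length Ls" "j < length Ls" "i \<noteq> j" "b < Ls ! i" "c < Ls ! j"
  shows "block_offset Ls i + b \<noteq> block_offset Ls j + c"
proof (cases "i < j")
  case True
  then have "block_offset Ls i + Ls ! i \<le> block_offset Ls j"
    using block_offset_Suc[OF assms(1)] block_offset_mono[of "Suc i" j Ls] by simp
  then show ?thesis using assms(4) by simp
next
  case False
  then have "block_offset Ls j + Ls ! j \<le> block_offset Ls i"
    using assms(3) block_offset_Suc[OF assms(2)] block_offset_mono[of "Suc j" i Ls] by simp
  then show ?thesis using assms(5) by simp
qed

lemma transpose_block_embedding_mult:
  assumes i: "i < length Ls" and j: "j < length Ls"
  shows "(block_embedding Ls i)\<^sup>T * block_embedding Ls j =
    (if i = j then 1\<^sub>m (Ls ! i) else 0\<^sub>m (Ls ! i) (Ls ! j))"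
proof (rule eq_matI)
  fix b c
  assume "b < dim_row (if i = j then 1\<^sub>m (Ls ! i) else 0\<^sub>m (Ls ! i) (Ls ! j))"
    "c < dim_col (if i = j then 1\<^sub>m (Ls ! i) else 0\<^sub>m (Ls ! i) (Ls ! j))"
  then have b: "b < Ls ! i" and c: "c < Ls ! j" by (auto split: if_splits)
  have "((block_embedding Ls i)\<^sup>T * block_embedding Ls j) $$ (b, c) =
      (\<Sum>a<sum_list Ls. block_embedding Ls i $$ (a, b) * block_embedding Ls j $$ (a, c))"
    using b c by (simp add: scalar_prod_def lessThan_atLeast0)
  also have "\<dots> = (\<Sum>a<sum_list Ls. if a = block_offset Ls i + b
         then (if block_offset Ls i + b = block_offset Ls j + c then 1 else 0) else 0)"
    by (rule sum.cong) (use b c in \<open>auto simp: index_block_embedding\<close>)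
  also have "\<dots> = (if block_offset Ls i + b = block_offset Ls j + c then 1 else 0)"
    using block_end_le_sum_list[OF i] b by simp
  also have "\<dots> = (if i = j then 1\<^sub>m (Ls ! i) else 0\<^sub>m (Ls ! i) (Ls ! j)) $$ (b, c)"
    using blocks_disjoint[OF i j _ b c] b c by auto
  finally show "((block_embedding Ls i)\<^sup>T * block_embedding Ls j) $$ (b, c) =
      (if i = j then 1\<^sub>m (Ls ! i) else 0\<^sub>m (Ls ! i) (Ls ! j)) $$ (b, c)" .
qed auto

lemma block_embeddings_resolve_identity:
  "mat_sum_rect (sum_list Ls) (sum_list Ls)
     (\<lambda>i. block_embedding Ls i * (block_embedding Ls i)\<^sup>T) (length Ls) = 1\<^sub>m (sum_list Ls)"
proof (rule eq_matI)
  fix a a' assume "a < dim_row (1\<^sub>m (sum_list Ls))" "a' < dim_col (1\<^sub>m (sum_list Ls))"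
  then have a: "a < sum_list Ls" and a': "a' < sum_list Ls" by auto
  let ?in = "\<lambda>i. block_offset Ls i \<le> a \<and> a < block_offset Ls (Suc i)"
  have entry: "(block_embedding Ls i * (block_embedding Ls i)\<^sup>T) $$ (a, a') =
      (if ?in i \<and> a = a' then 1 else 0)" if i: "i < length Ls" for i
  proof -
    have "(block_embedding Ls i * (block_embedding Ls i)\<^sup>T) $$ (a, a') =
        (\<Sum>b<Ls ! i. block_embedding Ls i $$ (a, b) * block_embedding Ls i $$ (a', b))"
      using a a' by (simp add: scalar_prod_def lessThan_atLeast0)
    also have "\<dots> = (\<Sum>b<Ls ! i. if b = a - block_offset Ls i
           then (if block_offset Ls i \<le> a \<and> a = a' then 1 else 0) else 0)"
      by (rule sum.cong) (use a a' in \<open>auto simp: index_block_embedding\<close>)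
    finally show ?thesis using block_offset_Suc[OF i] by auto
  qed
  have count: "(\<Sum>i<k. if ?in i then 1 else 0 :: real) = (if a < block_offset Ls k then 1 else 0)"
    if "k \<le> length Ls" for k
    using that
  proof (induction k)
    case (Suc k)
    then show ?case using block_offset_mono[of k "Suc k" Ls] by auto
  qed (simp add: block_offset_def)
  have "mat_sum_rect (sum_list Ls) (sum_list Ls)
      (\<lambda>i. block_embedding Ls i * (block_embedding Ls i)\<^sup>T) (length Ls) $$ (a, a') =
      (\<Sum>i<length Ls. if ?in i \<and> a = a' then 1 else 0)"
    using a a' entry by simp
  also have "\<dots> = (if a = a' then \<Sum>i<length Ls. if ?in i then 1 else 0 else 0)"
    by auto
  also have "\<dots> = 1\<^sub>m (sum_list Ls) $$ (a, a')"
    using count[of "length Ls"] a a' by (cases "a = a'") simp_all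
  finally show "mat_sum_rect (sum_list Ls) (sum_list Ls)
      (\<lambda>i. block_embedding Ls i * (block_embedding Ls i)\<^sup>T) (length Ls) $$ (a, a') =
      1\<^sub>m (sum_list Ls) $$ (a, a')" .
qed auto

lemma mult_eq_sum_over_blocks:
  assumes X: "X \<in> carrier_mat m (sum_list Ls)" and Y: "Y \<in> carrier_mat (sum_list Ls) k"
  shows "X * Y = mat_sum_rect m k
    (\<lambda>i. (X * block_embedding Ls i) * ((block_embedding Ls i)\<^sup>T * Y)) (length Ls)"
proof -
  let ?E = "block_embedding Ls" and ?M = "sum_list Ls"
  have EEt: "?E i * (?E i)\<^sup>T \<in> carrier_mat ?M ?M" for i
    by (meson block_embedding_carrier mult_carrier_mat transpose_carrier_mat)
  have "X * Y = X * mat_sum_rect ?M ?M (\<lambda>i. ?E i * (?E i)\<^sup>T) (length Ls) * Y"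
    using X by (simp add: block_embeddings_resolve_identity)
  also have "\<dots> = mat_sum_rect m k (\<lambda>i. X * (?E i * (?E i)\<^sup>T) * Y) (length Ls)"
    using X Y EEt by (simp add: mult_mat_sum_rect mat_sum_rect_mult)
  also have "\<dots> = mat_sum_rect m k (\<lambda>i. (X * ?E i) * ((?E i)\<^sup>T * Y)) (length Ls)"
  proof (intro mat_sum_rect_cong)
    fix i
    have E: "?E i \<in> carrier_mat ?M (Ls ! i)" and Et: "(?E i)\<^sup>T \<in> carrier_mat (Ls ! i) ?M" by simp_all
    have "X * (?E i * (?E i)\<^sup>T) = X * ?E i * (?E i)\<^sup>T" using assoc_mult_mat[OF X E Et] ..
    then show "X * (?E i * (?E i)\<^sup>T) * Y = (X * ?E i) * ((?E i)\<^sup>T * Y)"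
      using assoc_mult_mat[OF mult_carrier_mat[OF X E] Et Y] by simp
  qed
  finally show ?thesis .
qed

lemma block_row_exists:
  assumes U: "\<And>i. i < length Ls \<Longrightarrow> U i \<in> carrier_mat n (Ls ! i)"
  obtains V where "V \<in> carrier_mat n (sum_list Ls)" "\<And>i. i < length Ls \<Longrightarrow> V * block_embedding Ls i = U i"
proof
  let ?E = "block_embedding Ls" and ?M = "sum_list Ls"
  define V where "V = mat_sum_rect n ?M (\<lambda>i. U i * (?E i)\<^sup>T) (length Ls)"
  show "V \<in> carrier_mat n ?M" unfolding V_def by simp
  fix j assume j: "j < length Ls"
  have "V * ?E j = mat_sum_rect n (Ls ! j) (\<lambda>i. U i * (?E i)\<^sup>T * ?E j) (length Ls)"
    unfolding V_def
    by (intro mat_sum_rect_mult) (meson U block_embedding_carrier mult_carrier_mat transpose_carrier_mat)+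
  also have "\<dots> = mat_sum_rect n (Ls ! j) (\<lambda>i. U i * ((?E i)\<^sup>T * ?E j)) (length Ls)"
    by (intro mat_sum_rect_cong assoc_mult_mat[OF U _ block_embedding_carrier]) simp_all
  also have "\<dots> = mat_sum_rect n (Ls ! j) (\<lambda>i. if i = j then U j else 0\<^sub>m n (Ls ! j)) (length Ls)"
  proof (intro mat_sum_rect_cong)
    fix i assume "i < length Ls"
    with U[OF this] j show "U i * ((?E i)\<^sup>T * ?E j) = (if i = j then U j else 0\<^sub>m n (Ls ! j))"
      by (cases "i = j") (simp_all add: transpose_block_embedding_mult)
  qed
  also have "\<dots> = U j" using U j by (intro mat_sum_rect_single)
  finally show "V * ?E j = U j" .
qed

section \<open>The Naimark complement\<close>

lemma block_compression_gram_sum: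
  assumes W: "W \<in> carrier_mat (sum_list Ls) r"
  shows "mat_sum_rect r r (\<lambda>i. ((block_embedding Ls i)\<^sup>T * W)\<^sup>T * ((block_embedding Ls i)\<^sup>T * W))
    (length Ls) = W\<^sup>T * W"
proof -
  have "((block_embedding Ls i)\<^sup>T * W)\<^sup>T = W\<^sup>T * block_embedding Ls i" for i
    using transpose_mult[of "(block_embedding Ls i)\<^sup>T" "Ls ! i" "sum_list Ls" W r] W by simp
  then show ?thesis using mult_eq_sum_over_blocks[of "W\<^sup>T" r Ls W r] W by simp
qed

lemma compression_of_gram_complement:
  fixes E V W :: "real mat"
  assumes E: "E \<in> carrier_mat m l" "E\<^sup>T * E = 1\<^sub>m l" and V: "V \<in> carrier_mat n m"
    and VE: "(V * E)\<^sup>T * (V * E) = 1\<^sub>m l"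
    and W: "W \<in> carrier_mat m r" "W * W\<^sup>T = 1\<^sub>m m - c \<cdot>\<^sub>m (V\<^sup>T * V)"
  shows "(E\<^sup>T * W) * (E\<^sup>T * W)\<^sup>T = (1 - c) \<cdot>\<^sub>m 1\<^sub>m l"
proof -
  have Et: "E\<^sup>T \<in> carrier_mat l m" and Vt: "V\<^sup>T \<in> carrier_mat m n" using E V by simp_all
  have VtV: "V\<^sup>T * V \<in> carrier_mat m m" using V by simp
  have "(E\<^sup>T * W) * (E\<^sup>T * W)\<^sup>T = E\<^sup>T * (W * W\<^sup>T) * E"
  proof -
    have Wt: "W\<^sup>T \<in> carrier_mat r m" using W(1) by simp
    have "(E\<^sup>T * W) * (W\<^sup>T * E) = E\<^sup>T * ((W * W\<^sup>T) * E)"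
      using assoc_mult_mat[OF Et W(1) mult_carrier_mat[OF Wt E(1)]] assoc_mult_mat[OF W(1) Wt E(1)]
      by simp
    then show ?thesis
      using transpose_mult[OF Et W(1)] assoc_mult_mat[OF Et mult_carrier_mat[OF W(1) Wt] E(1)] by simp
  qed
  also have "\<dots> = E\<^sup>T * E - c \<cdot>\<^sub>m (E\<^sup>T * (V\<^sup>T * V) * E)"
    unfolding W(2)
    using mult_minus_distrib_mat[OF Et one_carrier_mat smult_carrier_mat[OF VtV]]
      minus_mult_distrib_mat[OF Et _ E(1)] mult_smult_distrib[OF Et VtV]
      mult_smult_assoc_mat[OF mult_carrier_mat[OF Et VtV] E(1)] Et VtV by simp
  also have "E\<^sup>T * (V\<^sup>T * V) * E = (V * E)\<^sup>T * (V * E)"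
    using transpose_mult[OF V E(1)] assoc_mult_mat[OF Et Vt V, symmetric]
      assoc_mult_mat[OF mult_carrier_mat[OF Et Vt] V E(1)] by simp
  finally show ?thesis unfolding E(2) VE by (intro eq_matI) auto
qed

lemma synthesis_operator_exists:
  fixes P :: "nat \<Rightarrow> real mat"
  assumes P: "\<And>i. i < length Ls \<Longrightarrow> orth_proj N (P i) \<and> vec_space.rank N (P i) = Ls ! i"
    and sum: "mat_sum N P (length Ls) = \<alpha> \<cdot>\<^sub>m 1\<^sub>m N"
  obtains V where "V \<in> carrier_mat N (sum_list Ls)" "V * V\<^sup>T = \<alpha> \<cdot>\<^sub>m 1\<^sub>m N"
    "\<And>i. i < length Ls \<Longrightarrow> (V * block_embedding Ls i)\<^sup>T * (V * block_embedding Ls i) = 1\<^sub>m (Ls ! i)"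
proof -
  let ?E = "block_embedding Ls"
  have "\<exists>U. U \<in> carrier_mat N (Ls ! i) \<and> U\<^sup>T * U = 1\<^sub>m (Ls ! i) \<and> U * U\<^sup>T = P i"
    if "i < length Ls" for i
    using orth_proj_isometry_factor[of N "P i"] P[OF that] by metis
  then obtain U where U: "\<And>i. i < length Ls \<Longrightarrow>
      U i \<in> carrier_mat N (Ls ! i) \<and> (U i)\<^sup>T * U i = 1\<^sub>m (Ls ! i) \<and> U i * (U i)\<^sup>T = P i"
    by metis
  obtain V where V: "V \<in> carrier_mat N (sum_list Ls)" "\<And>i. i < length Ls \<Longrightarrow> V * ?E i = U i"
    using block_row_exists[of Ls U N] U by blast
  have "V * V\<^sup>T = mat_sum_rect N N (\<lambda>i. (V * ?E i) * ((?E i)\<^sup>T * V\<^sup>T)) (length Ls)"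
    using mult_eq_sum_over_blocks[OF V(1), of "V\<^sup>T"] V(1) by simp
  also have "\<dots> = mat_sum_rect N N P (length Ls)"
  proof (intro mat_sum_rect_cong)
    fix i assume i: "i < length Ls"
    have "(?E i)\<^sup>T * V\<^sup>T = (V * ?E i)\<^sup>T" using transpose_mult[OF V(1) block_embedding_carrier] by simp
    then show "(V * ?E i) * ((?E i)\<^sup>T * V\<^sup>T) = P i" using U[OF i] V(2)[OF i] by simp
  qed
  also have "\<dots> = \<alpha> \<cdot>\<^sub>m 1\<^sub>m N"
    using sum mat_sum_eq_mat_sum_rect[of "length Ls" P N] P unfolding orth_proj_def by simp
  finally show ?thesis using that V U by simp
qed

lemma tight_fusion_frame_complement:
  assumes V: "V \<in> carrier_mat N (sum_list Ls)" "V * V\<^sup>T = \<alpha> \<cdot>\<^sub>m 1\<^sub>m N" and \<alpha>: "1 < \<alpha>"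
    and VE: "\<And>i. i < length Ls \<Longrightarrow>
      (V * block_embedding Ls i)\<^sup>T * (V * block_embedding Ls i) = 1\<^sub>m (Ls ! i)"
  shows "\<exists>R. (\<forall>i<length Ls. orth_proj (sum_list Ls - N) (R i) \<and>
      vec_space.rank (sum_list Ls - N) (R i) = Ls ! i) \<and>
    mat_sum (sum_list Ls - N) R (length Ls) = (\<alpha> / (\<alpha> - 1)) \<cdot>\<^sub>m 1\<^sub>m (sum_list Ls - N)"
proof -
  let ?E = "block_embedding Ls" and ?M = "sum_list Ls"
  define Q where "Q = 1\<^sub>m ?M - (1 / \<alpha>) \<cdot>\<^sub>m (V\<^sup>T * V)"
  have Q: "orth_proj ?M Q" "trace Q = real ?M - real N"
    unfolding Q_def using orth_proj_complement orth_proj_scaled_gram[OF _ V(2)] V(1) \<alpha> by auto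
  define r where "r = vec_space.rank ?M Q"
  obtain W where W: "W \<in> carrier_mat ?M r" "W\<^sup>T * W = 1\<^sub>m r" "W * W\<^sup>T = Q"
    using orth_proj_isometry_factor[OF Q(1)] unfolding r_def .
  have r: "r = ?M - N" using orth_proj_rank_eq_trace[OF Q(1)] Q(2) unfolding r_def by linarith
  define X where "X i = (?E i)\<^sup>T * W" for i
  have X: "X i \<in> carrier_mat (Ls ! i) r" for i
    unfolding X_def by (rule mult_carrier_mat[OF _ W(1)]) simp
  have XXt: "X i * (X i)\<^sup>T = (1 - 1 / \<alpha>) \<cdot>\<^sub>m 1\<^sub>m (Ls ! i)" if "i < length Ls" for i
    unfolding X_def using compression_of_gram_complement[OF _ _ V(1) VE[OF that] W(1)] W(3) that
    by (simp add: Q_def transpose_block_embedding_mult)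
  define R where "R i = (1 / (1 - 1 / \<alpha>)) \<cdot>\<^sub>m ((X i)\<^sup>T * X i)" for i
  have "1 - 1 / \<alpha> \<noteq> 0" using \<alpha> by simp
  note R = orth_proj_scaled_gram[OF X XXt this, folded R_def]
  have "mat_sum r R (length Ls) = (1 / (1 - 1 / \<alpha>)) \<cdot>\<^sub>m mat_sum_rect r r (\<lambda>i. (X i)\<^sup>T * X i) (length Ls)"
  proof -
    have XtX: "(X i)\<^sup>T * X i \<in> carrier_mat r r" for i using X[of i] by simp
    then have "mat_sum r R (length Ls) = mat_sum_rect r r R (length Ls)"
      unfolding R_def by (intro mat_sum_eq_mat_sum_rect) simp
    then show ?thesis unfolding R_def using smult_mat_sum_rect[OF XtX] by simp
  qed
  also have "\<dots> = (\<alpha> / (\<alpha> - 1)) \<cdot>\<^sub>m 1\<^sub>m r"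
    unfolding X_def block_compression_gram_sum[OF W(1)] W(2) using \<alpha> by (simp add: field_simps)
  moreover have "vec_space.rank r (R i) = Ls ! i" if "i < length Ls" for i
    using orth_proj_rank_eq_trace[OF R(1)[OF that]] R(2)[OF that] by simp
  ultimately show ?thesis using R(1) unfolding r[symmetric] by (intro exI[of _ R]) simp
qed

theorem theorem2p6:
  fixes N :: nat and \<alpha> :: real and Ls :: "nat list"
  assumes "0 < N" and "1 < \<alpha>" and "Ls \<in> TFF \<alpha> N"
  shows "Ls \<in> TFF (\<alpha> / (\<alpha> - 1)) (sum_list Ls - N)"
proof -
  obtain P where sorted: "sorted_wrt (\<ge>) Ls" and pos: "\<forall>L\<in>set Ls. 0 < L"
    and P: "\<forall>i<length Ls. orth_proj N (P i) \<and> vec_space.rank N (P i) = Ls ! i"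
    and sum: "mat_sum N P (length Ls) = \<alpha> \<cdot>\<^sub>m 1\<^sub>m N"
    using assms(3) unfolding TFF_def by blast
  obtain V where "V \<in> carrier_mat N (sum_list Ls)" "V * V\<^sup>T = \<alpha> \<cdot>\<^sub>m 1\<^sub>m N"
    "\<And>i. i < length Ls \<Longrightarrow> (V * block_embedding Ls i)\<^sup>T * (V * block_embedding Ls i) = 1\<^sub>m (Ls ! i)"
    using synthesis_operator_exists[of Ls N P \<alpha>] P sum by blast
  from tight_fusion_frame_complement[OF this(1,2) assms(2) this(3)]
  show ?thesis unfolding TFF_def using sorted pos by blast
qed

end
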